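(* Let $A$ be a Banach algebra and $a_0\in Z(A)\setminus\{0\}$ with $\|a_0\|\le 1$. Then for every integer $n\ge 3$: (i) $Mul_n(A)\bullet_{a_0}Mul_2(A)\subseteq Mul_2(A)$; (ii) $Mul_{n-1}(A)$ is a closed left ideal of $(Mul_n(A),\bullet_{a_0})$, so that $Mul_2(A)\lhd Mul_3(A)\lhd\cdots\lhd Mul_{n-1}(A)\lhd Mul_n(A)\lhd\cdots$.
   Context: $Z(A)$ is the center of $A$. For $m\ge 2$, $Mul_m(A)$ is the set of bounded linear maps $T:A\to A$ with $T(a_1\cdots a_m)=a_1T(a_2\cdots a_m)=T(a_1\cdots a_{m-1})a_m$ for all $a_i\in A$. On $Mul_n(A)$ the product is $S\bullet_{a_0}T(a)=S(a_0^{n-2}T(a))$. *)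

theory Defs
  imports "HOL-Analysis.Analysis"
begin

text \<open>Product of a nonempty list in a (possibly non-unital) algebra.
  The value on the empty list is irrelevant and never used.\<close>
fun lprod :: "'a::{times,zero} list \<Rightarrow> 'a" where
  "lprod [] = 0"
| "lprod [a] = a"
| "lprod (a # b # xs) = a * lprod (b # xs)"

text \<open>Positive powers a^k (k \<ge> 1) without requiring a unit.\<close>
definition npow :: "'a::{times,zero} \<Rightarrow> nat \<Rightarrow> 'a" where
  "npow a k = lprod (replicate k a)"

definition center :: "'a::times set" where
  "center = {z. \<forall>x. z * x = x * z}"

definition Mul :: "nat \<Rightarrow> ('a::real_normed_algebra \<Rightarrow> 'a) set" where
  "Mul m = {T. bounded_linear T \<and>
     (\<forall>as. length as = m \<longrightarrow>
        T (lprod as) = hd as * T (lprod (tl as)) \<and>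
        T (lprod as) = T (lprod (butlast as)) * last as)}"

definition mulprod :: "nat \<Rightarrow> 'a::real_normed_algebra \<Rightarrow> ('a \<Rightarrow> 'a) \<Rightarrow> ('a \<Rightarrow> 'a) \<Rightarrow> ('a \<Rightarrow> 'a)" where
  "mulprod n a0 S T = (\<lambda>a. S (npow a0 (n - 2) * T a))"

definition MulL :: "nat \<Rightarrow> ('a::{real_normed_algebra,banach} \<Rightarrow>\<^sub>L 'a) set" where
  "MulL m = {T. blinfun_apply T \<in> Mul m}"

end

theory Submission
  imports Defs
begin

(* A map T lies in Mul m (m >= 2) iff it is bounded linear and satisfies the two
   one-sided module laws  T(a * p) = a * T p  and  T(p * b) = T p * b  for every
   product p of m - 1 factors (Mul_intro, Mul_left, Mul_right).  Merging two
   adjacent factors shows Mul m \<subseteq> Mul (m + 1) (Mul_subset_Mul_Suc).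
   For central a0 the power c = a0^(n-2) commutes with everything, so c * t is a
   product of n - 1 factors; hence for S \<in> Mul n the map t \<mapsto> S(c * t) is a
   two-sided A-module map (mulprod_left_law, mulprod_right_law).  Consequently
   S \<bullet>_{a0} T inherits the module laws of T, and Mul m is a left ideal of
   (Mul n, \<bullet>_{a0}) for every m >= 2 (mulprod_Mul).  Closedness and linearity of
   Mul m inside the bounded operators follow because all defining conditions are
   pointwise linear equations, continuous in the operator.  The theorem collects
   these facts for m = 2 and m = n - 1. *)

lemma lprod_Cons: "xs \<noteq> [] \<Longrightarrow> lprod (a # xs) = a * lprod xs"
  by (cases xs) auto

lemma lprod_snoc:
  fixes xs :: "'a::{semigroup_mult,zero} list"
  shows "xs \<noteq> [] \<Longrightarrow> lprod (xs @ [b]) = lprod xs * b"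
proof (induction xs rule: lprod.induct)
  case (3 a c xs)
  then show ?case by (simp add: mult.assoc)
qed simp_all

lemma lprod_merge:
  fixes b c :: "'a::{semigroup_mult,zero}"
  shows "lprod ((b * c) # zs) = lprod (b # c # zs)"
  by (cases zs) (auto simp: mult.assoc)

lemma length_ge_2_obtain:
  assumes "length xs \<ge> 2"
  obtains b c zs where "xs = b # c # zs"
  using assms by (cases xs; cases "tl xs") auto

lemma Mul_left:
  assumes "T \<in> Mul m" "m \<ge> 2" "length ys = m - 1"
  shows "T (a * lprod ys) = a * T (lprod ys)"
proof -
  have "ys \<noteq> []" and len: "length (a # ys) = m" using assms(2,3) by auto
  moreover have "T (lprod (a # ys)) = hd (a # ys) * T (lprod (tl (a # ys)))"
    using assms(1) len unfolding Mul_def by blast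
  ultimately show ?thesis by (simp add: lprod_Cons)
qed

lemma Mul_right:
  fixes T :: "'a::real_normed_algebra \<Rightarrow> 'a"
  assumes "T \<in> Mul m" "m \<ge> 2" "length xs = m - 1"
  shows "T (lprod xs * b) = T (lprod xs) * b"
proof -
  have "xs \<noteq> []" and len: "length (xs @ [b]) = m" using assms(2,3) by auto
  moreover have "T (lprod (xs @ [b])) = T (lprod (butlast (xs @ [b]))) * last (xs @ [b])"
    using assms(1) len unfolding Mul_def by blast
  ultimately show ?thesis by (simp add: lprod_snoc)
qed

lemma Mul_bounded_linear: "T \<in> Mul m \<Longrightarrow> bounded_linear T"
  by (simp add: Mul_def)

lemma Mul_intro:
  fixes T :: "'a::real_normed_algebra \<Rightarrow> 'a"
  assumes m: "m \<ge> 2" and "bounded_linear T"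
    and left: "\<And>a ys. length ys = m - 1 \<Longrightarrow> T (a * lprod ys) = a * T (lprod ys)"
    and right: "\<And>xs b. length xs = m - 1 \<Longrightarrow> T (lprod xs * b) = T (lprod xs) * b"
  shows "T \<in> Mul m"
  unfolding Mul_def
proof (intro CollectI conjI allI impI)
  fix as :: "'a list" assume len: "length as = m"
  then obtain a ys where as: "as = a # ys" using m by (cases as) auto
  with len m have "ys \<noteq> []" "length ys = m - 1" by auto
  then show "T (lprod as) = hd as * T (lprod (tl as))"
    using left by (simp add: as lprod_Cons)
  from len m have "as \<noteq> []" by auto
  then obtain xs b where as': "as = xs @ [b]" by (metis append_butlast_last_id)
  with len m have "xs \<noteq> []" "length xs = m - 1" by auto
  then show "T (lprod as) = T (lprod (butlast as)) * last as"
    using right by (simp add: as' lprod_snoc)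
qed (use assms in simp)

text \<open>The chain \<open>Mul 2 \<subseteq> Mul 3 \<subseteq> \<dots>\<close>: a product of m factors is also a
  product of m - 1 factors after merging the first two.\<close>
lemma Mul_subset_Mul_Suc:
  fixes T :: "'a::real_normed_algebra \<Rightarrow> 'a"
  assumes T: "T \<in> Mul m" and m: "m \<ge> 2"
  shows "T \<in> Mul (Suc m)"
proof (rule Mul_intro)
  show "bounded_linear T" using T by (rule Mul_bounded_linear)
next
  fix a and ys :: "'a list" assume "length ys = Suc m - 1"
  with m obtain b c zs where ys: "ys = b # c # zs" and "length ((b * c) # zs) = m - 1"
    by (auto elim: length_ge_2_obtain[of ys])
  then show "T (a * lprod ys) = a * T (lprod ys)"
    using Mul_left[OF T m] by (metis lprod_merge)
next
  fix b and ys :: "'a list" assume "length ys = Suc m - 1"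
  with m obtain a c zs where ys: "ys = a # c # zs" and "length ((a * c) # zs) = m - 1"
    by (auto elim: length_ge_2_obtain[of ys])
  then show "T (lprod ys * b) = T (lprod ys) * b"
    using Mul_right[OF T m] by (metis lprod_merge)
qed (use m in simp)

lemma npow_center:
  fixes a0 :: "'a::{semigroup_mult,mult_zero}"
  assumes a0: "a0 \<in> center"
  shows "npow a0 k \<in> center"
  unfolding npow_def
proof (induction k)
  case (Suc k)
  have a0x: "a0 * x = x * a0" for x using a0 by (simp add: center_def)
  show ?case
  proof (cases "k = 0")
    case False
    then have "lprod (replicate (Suc k) a0) = a0 * lprod (replicate k a0)"
      by (simp add: lprod_Cons)
    with Suc show ?thesis by (simp add: center_def) (metis a0x mult.assoc)
  qed (use a0 in simp)
qed (simp add: center_def)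

lemma npow_times_lprod:
  fixes a0 :: "'a::{semigroup_mult,zero}"
  assumes "k \<ge> 1"
  shows "npow a0 k * t = lprod (replicate k a0 @ [t])"
  using assms by (simp add: npow_def lprod_snoc)

lemma mulprod_left_law:
  fixes S :: "'a::real_normed_algebra \<Rightarrow> 'a"
  assumes S: "S \<in> Mul n" and n: "n \<ge> 3" and a0: "a0 \<in> center"
  shows "S (npow a0 (n - 2) * (a * t)) = a * S (npow a0 (n - 2) * t)"
proof -
  have "npow a0 (n - 2) * (a * t) = a * (npow a0 (n - 2) * t)"
    using npow_center[OF a0, of "n - 2"]
    by (simp add: center_def) (metis mult.assoc)
  also have "\<dots> = a * lprod (replicate (n - 2) a0 @ [t])"
    using n by (simp add: npow_times_lprod)
  finally show ?thesis
    using Mul_left[OF S, of "replicate (n - 2) a0 @ [t]"] n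
    by (simp add: npow_times_lprod)
qed

lemma mulprod_right_law:
  fixes S :: "'a::real_normed_algebra \<Rightarrow> 'a"
  assumes S: "S \<in> Mul n" and n: "n \<ge> 3"
  shows "S (npow a0 (n - 2) * (t * b)) = S (npow a0 (n - 2) * t) * b"
proof -
  let ?p = "replicate (n - 2) a0 @ [t]"
  have p: "npow a0 (n - 2) * t = lprod ?p" using n by (simp add: npow_times_lprod)
  have "S (npow a0 (n - 2) * (t * b)) = S (lprod ?p * b)" by (simp add: p mult.assoc[symmetric])
  also have "\<dots> = S (lprod ?p) * b" using Mul_right[OF S] n by simp
  finally show ?thesis by (simp add: p)
qed

lemma mulprod_bounded_linear:
  assumes "bounded_linear S" "bounded_linear T"
  shows "bounded_linear (mulprod n a0 S T)"
  unfolding mulprod_def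
  by (rule bounded_linear_compose[OF assms(1)],
      rule bounded_linear_compose[OF bounded_linear_mult_right assms(2)])

lemma mulprod_Mul:
  fixes S :: "'a::real_normed_algebra \<Rightarrow> 'a"
  assumes S: "S \<in> Mul n" and n: "n \<ge> 3" and a0: "a0 \<in> center"
    and T: "T \<in> Mul m" and m: "m \<ge> 2"
  shows "mulprod n a0 S T \<in> Mul m"
proof (rule Mul_intro[OF m])
  show "bounded_linear (mulprod n a0 S T)"
    using S T by (intro mulprod_bounded_linear Mul_bounded_linear)
next
  fix a and ys :: "'a list" assume "length ys = m - 1"
  then show "mulprod n a0 S T (a * lprod ys) = a * mulprod n a0 S T (lprod ys)"
    unfolding mulprod_def by (simp only: Mul_left[OF T m] mulprod_left_law[OF S n a0])
next
  fix b and xs :: "'a list" assume "length xs = m - 1"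
  then show "mulprod n a0 S T (lprod xs * b) = mulprod n a0 S T (lprod xs) * b"
    unfolding mulprod_def by (simp only: Mul_right[OF T m] mulprod_right_law[OF S n])
qed

lemma Mul_zero: "(\<lambda>x. 0) \<in> Mul m"
  by (simp add: Mul_def bounded_linear_zero)

lemma Mul_add:
  assumes "f \<in> Mul m" "g \<in> Mul m"
  shows "(\<lambda>x. f x + g x) \<in> Mul m"
  unfolding Mul_def
proof (intro CollectI conjI allI impI)
  show "bounded_linear (\<lambda>x. f x + g x)"
    using assms by (auto simp: Mul_def intro: bounded_linear_add)
next
  fix as :: "'a list" assume "length as = m"
  then have "f (lprod as) = hd as * f (lprod (tl as))"
    "f (lprod as) = f (lprod (butlast as)) * last as"
    "g (lprod as) = hd as * g (lprod (tl as))"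
    "g (lprod as) = g (lprod (butlast as)) * last as"
    using assms unfolding Mul_def by blast+
  then show "f (lprod as) + g (lprod as) = hd as * (f (lprod (tl as)) + g (lprod (tl as)))"
    and "f (lprod as) + g (lprod as) = (f (lprod (butlast as)) + g (lprod (butlast as))) * last as"
    by (simp_all add: distrib_left distrib_right)
qed

lemma Mul_scaleR: "f \<in> Mul m \<Longrightarrow> (\<lambda>x. c *\<^sub>R f x) \<in> Mul m"
  unfolding Mul_def
  by (auto intro: bounded_linear_compose[OF bounded_linear_scaleR_right]
      simp: mult_scaleR_left mult_scaleR_right)

lemma MulL_subspace: "subspace (MulL m :: ('a::{real_normed_algebra,banach} \<Rightarrow>\<^sub>L 'a) set)"
  unfolding subspace_def MulL_def
  by (auto simp: Mul_zero Mul_add Mul_scaleR plus_blinfun.rep_eq scaleR_blinfun.rep_eq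
      zero_blinfun.rep_eq)

text \<open>Each defining identity is an equation between operators evaluated at fixed
  points, hence a closed condition in the operator norm.\<close>
lemma MulL_closed: "closed (MulL m :: ('a::{real_normed_algebra,banach} \<Rightarrow>\<^sub>L 'a) set)"
proof -
  have "MulL m = (\<Inter>as\<in>{as. length as = m}. {T :: 'a \<Rightarrow>\<^sub>L 'a.
        blinfun_apply T (lprod as) = hd as * blinfun_apply T (lprod (tl as)) \<and>
        blinfun_apply T (lprod as) = blinfun_apply T (lprod (butlast as)) * last as})"
    by (auto simp: MulL_def Mul_def blinfun.bounded_linear_right)
  also have "closed \<dots>"
    by (intro closed_INT ballI closed_Collect_conj closed_Collect_eq continuous_intros)
  finally show ?thesis .
qed

theorem mainTheorem8:
  fixes a0 :: "'a::{real_normed_algebra,banach}"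
  assumes "a0 \<in> center" and "a0 \<noteq> 0" and "norm a0 \<le> 1"
  shows "\<forall>n::nat. n \<ge> 3 \<longrightarrow>
     (\<forall>S\<in>Mul n. \<forall>T\<in>Mul 2. mulprod n a0 S T \<in> Mul 2)
   \<and> Mul (n - 1) \<subseteq> (Mul n :: ('a \<Rightarrow> 'a) set)
   \<and> subspace (MulL (n - 1) :: ('a \<Rightarrow>\<^sub>L 'a) set)
   \<and> closed (MulL (n - 1) :: ('a \<Rightarrow>\<^sub>L 'a) set)
   \<and> (\<forall>S\<in>Mul n. \<forall>T\<in>Mul (n - 1). mulprod n a0 S T \<in> Mul (n - 1))"
proof (intro allI impI conjI ballI subsetI MulL_subspace MulL_closed)
  fix n :: nat assume n: "n \<ge> 3"
  then have n1: "n - 1 \<ge> 2" and Suc_n1: "Suc (n - 1) = n" by auto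
  show "mulprod n a0 S T \<in> Mul 2" if "S \<in> Mul n" "T \<in> Mul 2" for S T :: "'a \<Rightarrow> 'a"
    using mulprod_Mul[OF that(1) n assms(1) that(2)] by simp
  show "mulprod n a0 S T \<in> Mul (n - 1)" if "S \<in> Mul n" "T \<in> Mul (n - 1)" for S T :: "'a \<Rightarrow> 'a"
    using mulprod_Mul[OF that(1) n assms(1) that(2) n1] .
  show "T \<in> Mul n" if "T \<in> Mul (n - 1)" for T :: "'a \<Rightarrow> 'a"
    using Mul_subset_Mul_Suc[OF that n1] by (simp only: Suc_n1)
qed

end
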